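(* Let $(r_n)_{n\ge0},(b_n)_{n\ge0},(d_n)_{n\ge0}$ be arbitrary sequences of real numbers and $H_n=i^n\begin{pmatrix}r_n&ib_n\\-ib_n&d_n\end{pmatrix}$. Then there exist real signed Borel measures $\rho_{11},\rho_{12},\rho_{22}$ on $\mathbb R$, each a difference of two positive Borel measures having finite moments of all orders, such that the matrix measure $d\bar\rho=\begin{pmatrix}d\rho_{11}&i\,d\rho_{12}\\-i\,d\rho_{12}&d\rho_{22}\end{pmatrix}$ satisfies $\int_{\mathbb R}(i\mu)^n\,d\bar\rho(\mu)=H_n$ for all $n\ge0$. Equivalently, the function $S(\lambda)=I-\int_{\mathbb R}\frac{1}{\lambda-i\mu}\,d\bar\rho(\mu)\,\sigma_1$ has $n$-th moments $H^S_n:=\int_{\mathbb R}(i\mu)^nd\bar\rho(\mu)$ equal to $H_n$.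
   Context: $\sigma_1$ denotes a fixed invertible self-adjoint $2\times2$ matrix (in the paper, $\sigma_1=\begin{pmatrix}0&1\\1&0\end{pmatrix}$). *)

theory Defs
  imports "HOL-Analysis.Analysis"
begin

definition finite_moments_borel :: "real measure \<Rightarrow> bool" where
  "finite_moments_borel M \<longleftrightarrow> sets M = sets borel \<and> (\<forall>n::nat. integrable M (\<lambda>x. x ^ n))"

text \<open>A real signed Borel measure, represented as a difference (fst minus snd) of two
  positive Borel measures.\<close>
type_synonym signed_measure = "real measure \<times> real measure"

definition signed_fm :: "signed_measure \<Rightarrow> bool" where
  "signed_fm \<rho> \<longleftrightarrow> finite_moments_borel (fst \<rho>) \<and> finite_moments_borel (snd \<rho>)"

definition sint :: "signed_measure \<Rightarrow> (real \<Rightarrow> complex) \<Rightarrow> complex" where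
  "sint \<rho> f = integral\<^sup>L (fst \<rho>) f - integral\<^sup>L (snd \<rho>) f"

definition matrix_moment ::
  "signed_measure \<Rightarrow> signed_measure \<Rightarrow> signed_measure \<Rightarrow> nat \<Rightarrow> complex^2^2" where
  "matrix_moment \<rho>11 \<rho>12 \<rho>22 n =
     (let f = (\<lambda>\<mu>::real. (\<i> * complex_of_real \<mu>) ^ n) in
      (\<chi> j k. if j = 1 \<and> k = 1 then sint \<rho>11 f
              else if j = 1 \<and> k = 2 then \<i> * sint \<rho>12 f
              else if j = 2 \<and> k = 1 then - \<i> * sint \<rho>12 f
              else sint \<rho>22 f))"

definition H_mat :: "(nat \<Rightarrow> real) \<Rightarrow> (nat \<Rightarrow> real) \<Rightarrow> (nat \<Rightarrow> real) \<Rightarrow> nat \<Rightarrow> complex^2^2" where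
  "H_mat r b d n =
     (\<chi> j k. \<i> ^ n * (if j = 1 \<and> k = 1 then complex_of_real (r n)
              else if j = 1 \<and> k = 2 then \<i> * complex_of_real (b n)
              else if j = 2 \<and> k = 1 then - \<i> * complex_of_real (b n)
              else complex_of_real (d n)))"

end

theory Submission
  imports Defs
begin

text \<open>The entries of the matrix measure are independent, so it suffices that every real
  sequence \<open>s\<close> is the moment sequence of a signed measure with finite absolute moments
  (Boas). Let \<open>\<Delta>\<^sub>n = \<Sum>\<^sub>k (-1)^(n-k) (n choose k) \<delta>\<^sub>k\<close> be the \<open>n\<close>-th forward difference at \<open>0\<close>:
  its moments of order \<open>< n\<close> vanish and its \<open>n\<close>-th moment is \<open>n!\<close>. Dilating \<open>\<Delta>\<^sub>n\<close> by \<open>T\<close> and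
  multiplying it by \<open>a / T^n\<close> keeps these properties up to the factor \<open>a\<close>, while its absolute
  moments of order \<open>< n\<close> become \<open>O(a / T)\<close>. Choose the coefficients \<open>a\<^sub>n\<close> recursively to correct
  the \<open>n\<close>-th moment and the dilations \<open>T\<^sub>n\<close> so large that these absolute moments are below
  \<open>2^-n\<close>: then the series of all blocks converges absolutely in every moment, and its \<open>j\<close>-th
  moment is the finite sum over the blocks \<open>n \<le> j\<close>, i.e. \<open>s j\<close>.\<close>

definition discrete_measure :: "('a \<Rightarrow> real) \<Rightarrow> ('a \<Rightarrow> real) \<Rightarrow> 'a set \<Rightarrow> real measure" where
  "discrete_measure c p S = distr (density (count_space S) (\<lambda>k. ennreal (c k))) borel p"

lemma sets_discrete_measure [simp]: "sets (discrete_measure c p S) = sets borel"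
  by (simp add: discrete_measure_def)

lemma
  assumes "\<And>k. k \<in> S \<Longrightarrow> 0 \<le> c k" and "g \<in> borel_measurable borel"
  shows integrable_discrete_measure_iff:
      "integrable (discrete_measure c p S) (g :: real \<Rightarrow> real)
         \<longleftrightarrow> integrable (count_space S) (\<lambda>k. c k * g (p k))"
    and integral_discrete_measure:
      "integral\<^sup>L (discrete_measure c p S) g = integral\<^sup>L (count_space S) (\<lambda>k. c k * g (p k))"
  using assms
  by (simp_all add: discrete_measure_def integrable_distr_eq integral_distr
        integrable_density integral_density AE_count_space)

lemma finite_moments_discrete_measure:
  assumes "\<And>k. k \<in> S \<Longrightarrow> 0 \<le> c k" and "\<And>j. integrable (count_space S) (\<lambda>k. c k * p k ^ j)"
  shows "finite_moments_borel (discrete_measure c p S)"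
  using assms by (simp add: finite_moments_borel_def integrable_discrete_measure_iff)

lemma signed_discrete_measure_moments:
  fixes c p :: "'a \<Rightarrow> real"
  assumes int: "\<And>j. integrable (count_space S) (\<lambda>k. c k * p k ^ j)"
  shows "\<exists>\<mu>p \<mu>m. finite_moments_borel \<mu>p \<and> finite_moments_borel \<mu>m \<and>
           (\<forall>j. integral\<^sup>L \<mu>p (\<lambda>x. x ^ j) - integral\<^sup>L \<mu>m (\<lambda>x. x ^ j)
                  = integral\<^sup>L (count_space S) (\<lambda>k. c k * p k ^ j))"
proof (intro exI conjI allI)
  define cp where "cp k = max (c k) 0" for k
  define cm where "cm k = max (- c k) 0" for k
  have nonneg: "0 \<le> cp k" "0 \<le> cm k" for k
    by (auto simp: cp_def cm_def)
  have int_cp: "integrable (count_space S) (\<lambda>k. cp k * p k ^ j)" for j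
    by (rule Bochner_Integration.integrable_bound[OF int[of j]])
       (auto simp: cp_def abs_mult intro!: AE_I2 mult_right_mono)
  have int_cm: "integrable (count_space S) (\<lambda>k. cm k * p k ^ j)" for j
    by (rule Bochner_Integration.integrable_bound[OF int[of j]])
       (auto simp: cm_def abs_mult intro!: AE_I2 mult_right_mono)
  show "finite_moments_borel (discrete_measure cp p S)"
    "finite_moments_borel (discrete_measure cm p S)"
    using nonneg int_cp int_cm by (auto intro: finite_moments_discrete_measure)
  fix j
  have "integral\<^sup>L (discrete_measure cp p S) (\<lambda>x. x ^ j) - integral\<^sup>L (discrete_measure cm p S) (\<lambda>x. x ^ j)
      = integral\<^sup>L (count_space S) (\<lambda>k. cp k * p k ^ j - cm k * p k ^ j)"
    using nonneg int_cp int_cm by (simp add: integral_discrete_measure)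
  also have "\<dots> = integral\<^sup>L (count_space S) (\<lambda>k. c k * p k ^ j)"
    by (rule Bochner_Integration.integral_cong) (auto simp: cp_def cm_def max_def algebra_simps)
  finally show "integral\<^sup>L (discrete_measure cp p S) (\<lambda>x. x ^ j)
      - integral\<^sup>L (discrete_measure cm p S) (\<lambda>x. x ^ j)
      = integral\<^sup>L (count_space S) (\<lambda>k. c k * p k ^ j)" .
qed

lemma
  fixes g :: "nat \<times> 'a \<Rightarrow> real"
  assumes fin: "\<And>n. finite (F n)" and summable: "summable (\<lambda>n. \<Sum>i\<in>F n. \<bar>g (n, i)\<bar>)"
  shows integrable_count_space_Sigma_finite: "integrable (count_space (Sigma UNIV F)) g"
    and integral_count_space_Sigma_finite:
      "integral\<^sup>L (count_space (Sigma UNIV F)) g = (\<Sum>n. \<Sum>i\<in>F n. g (n, i))"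
proof -
  have count: "countable (F n)" for n
    using fin by (rule countable_finite)
  have abs_sum_block: "norm (infsetsum (\<lambda>i. norm (g (n, i))) (F n)) = (\<Sum>i\<in>F n. \<bar>g (n, i)\<bar>)" for n
    using fin by (simp add: sum_nonneg)
  have abs_summable: "Infinite_Set_Sum.abs_summable_on g (Sigma UNIV F)"
    using summable fin count
    by (simp add: Infinite_Set_Sum.abs_summable_on_Sigma_iff
        Infinite_Set_Sum.abs_summable_on_nat_iff' abs_sum_block)
  then show "integrable (count_space (Sigma UNIV F)) g"
    by (simp add: Infinite_Set_Sum.abs_summable_on_def)
  have "integral\<^sup>L (count_space (Sigma UNIV F)) g = infsetsum (\<lambda>n. \<Sum>i\<in>F n. g (n, i)) UNIV"
    using abs_summable count fin by (simp add: infsetsum_def[symmetric] infsetsum_Sigma)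
  also have "\<dots> = (\<Sum>n. \<Sum>i\<in>F n. g (n, i))"
  proof (rule infsetsum_nat')
    have "norm (\<Sum>i\<in>F n. g (n, i)) \<le> (\<Sum>i\<in>F n. \<bar>g (n, i)\<bar>)" for n
      by (simp add: sum_abs)
    then show "Infinite_Set_Sum.abs_summable_on (\<lambda>n. \<Sum>i\<in>F n. g (n, i)) UNIV"
      unfolding Infinite_Set_Sum.abs_summable_on_nat_iff'
      by (intro summable_comparison_test[OF _ summable]) auto
  qed
  finally show "integral\<^sup>L (count_space (Sigma UNIV F)) g = (\<Sum>n. \<Sum>i\<in>F n. g (n, i))" .
qed

text \<open>A list of pairs \<open>(w, x)\<close> stands for the signed measure \<open>\<Sum> w \<delta>\<^sub>x\<close>.\<close>

definition moment :: "(real \<times> real) list \<Rightarrow> nat \<Rightarrow> real" where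
  "moment L j = (\<Sum>(w, x)\<leftarrow>L. w * x ^ j)"

definition abs_moment :: "(real \<times> real) list \<Rightarrow> nat \<Rightarrow> real" where
  "abs_moment L j = (\<Sum>(w, x)\<leftarrow>L. \<bar>w\<bar> * \<bar>x\<bar> ^ j)"

lemma abs_moment_nonneg: "0 \<le> abs_moment L j"
  unfolding abs_moment_def by (induction L) auto

lemma moment_conv_sum_nth: "moment L j = (\<Sum>i<length L. fst (L ! i) * snd (L ! i) ^ j)"
  unfolding moment_def by (simp add: sum_list_sum_nth atLeast0LessThan case_prod_beta)

lemma abs_moment_conv_sum_nth:
  "abs_moment L j = (\<Sum>i<length L. \<bar>fst (L ! i) * snd (L ! i) ^ j\<bar>)"
  unfolding abs_moment_def
  by (simp add: sum_list_sum_nth atLeast0LessThan case_prod_beta abs_mult power_abs)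

lemma moments_of_atom_series:
  fixes L :: "nat \<Rightarrow> (real \<times> real) list"
  assumes "\<And>j. summable (\<lambda>n. abs_moment (L n) j)"
  shows "\<exists>\<mu>p \<mu>m. finite_moments_borel \<mu>p \<and> finite_moments_borel \<mu>m \<and>
           (\<forall>j. integral\<^sup>L \<mu>p (\<lambda>x. x ^ j) - integral\<^sup>L \<mu>m (\<lambda>x. x ^ j) = (\<Sum>n. moment (L n) j))"
proof -
  define F where "F n = {..<length (L n)}" for n
  define c where "c k = fst (L (fst k) ! snd k)" for k
  define p where "p k = snd (L (fst k) ! snd k)" for k
  have summable: "summable (\<lambda>n. \<Sum>i\<in>F n. \<bar>c (n, i) * p (n, i) ^ j\<bar>)" for j
    using assms[of j] by (simp add: F_def c_def p_def abs_moment_conv_sum_nth)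
  have "integral\<^sup>L (count_space (Sigma UNIV F)) (\<lambda>k. c k * p k ^ j) = (\<Sum>n. moment (L n) j)" for j
    using summable
    by (simp add: integral_count_space_Sigma_finite F_def c_def p_def moment_conv_sum_nth)
  with signed_discrete_measure_moments[of "Sigma UNIV F" c p] summable show ?thesis
    by (simp add: integrable_count_space_Sigma_finite F_def)
qed

text \<open>\<open>difference_atoms n\<close> is the forward difference \<open>\<Delta>\<^sub>n\<close> at \<open>0\<close>, unfolded as
  \<open>\<Delta>\<^sub>n\<^sub>+\<^sub>1 = (\<Delta>\<^sub>n shifted by 1) - \<Delta>\<^sub>n\<close>.\<close>

primrec difference_atoms :: "nat \<Rightarrow> (real \<times> real) list" where
  "difference_atoms 0 = [(1, 0)]"
| "difference_atoms (Suc n) =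
     map (\<lambda>(w, x). (w, x + 1)) (difference_atoms n) @ map (\<lambda>(w, x). (- w, x)) (difference_atoms n)"

lemma moment_shift_diff:
  "moment (map (\<lambda>(w, x). (w, x + 1)) L @ map (\<lambda>(w, x). (- w, x)) L) j
     = (\<Sum>i<j. of_nat (j choose i) * moment L i)"
proof (induction L)
  case Nil
  then show ?case by (simp add: moment_def)
next
  case (Cons a L)
  obtain w x where a: "a = (w, x)" by fastforce
  have "w * (x + 1) ^ j - w * x ^ j = (\<Sum>i<j. of_nat (j choose i) * (w * x ^ i))"
    by (subst binomial_ring[of x 1 j])
       (simp add: sum_distrib_left lessThan_Suc_atMost[symmetric] algebra_simps)
  with Cons show ?case by (simp add: a moment_def sum.distrib algebra_simps)
qed

lemma moment_difference_atoms:
  "moment (difference_atoms n) n = fact n \<and> (\<forall>j<n. moment (difference_atoms n) j = 0)"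
proof (induction n)
  case 0
  then show ?case by (simp add: moment_def)
next
  case (Suc n)
  then have "moment (difference_atoms (Suc n)) j = 0" if "j < Suc n" for j
    using that by (auto simp: moment_shift_diff intro!: sum.neutral)
  moreover have "moment (difference_atoms (Suc n)) (Suc n) = of_nat (Suc n) * fact n"
    using Suc by (simp add: moment_shift_diff lessThan_Suc)
  ultimately show ?case by simp
qed

definition scale_atoms :: "real \<Rightarrow> real \<Rightarrow> (real \<times> real) list \<Rightarrow> (real \<times> real) list" where
  "scale_atoms c T L = map (\<lambda>(w, x). (c * w, T * x)) L"

lemma moment_scale_atoms: "moment (scale_atoms c T L) j = c * T ^ j * moment L j"
  unfolding moment_def scale_atoms_def by (induction L) (auto simp: power_mult_distrib algebra_simps)

lemma abs_moment_scale_atoms: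
  "abs_moment (scale_atoms c T L) j = \<bar>c\<bar> * \<bar>T\<bar> ^ j * abs_moment L j"
  unfolding abs_moment_def scale_atoms_def
  by (induction L) (auto simp: abs_mult power_mult_distrib algebra_simps)

definition difference_abs_moment_bound :: "nat \<Rightarrow> real" where
  "difference_abs_moment_bound n = (\<Sum>j<n. abs_moment (difference_atoms n) j)"

definition dilation :: "nat \<Rightarrow> real \<Rightarrow> real" where
  "dilation n a = 2 ^ n * (\<bar>a\<bar> + 1) * (difference_abs_moment_bound n + 1)"

definition block :: "nat \<Rightarrow> real \<Rightarrow> (real \<times> real) list" where
  "block n a = scale_atoms (a / dilation n a ^ n) (dilation n a) (difference_atoms n)"

lemma dilation_ge_1: "1 \<le> dilation n a"
proof -
  have "1 * 1 * 1 \<le> (2::real) ^ n * (\<bar>a\<bar> + 1) * (difference_abs_moment_bound n + 1)"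
    by (intro mult_mono) (auto simp: difference_abs_moment_bound_def sum_nonneg abs_moment_nonneg)
  then show ?thesis by (simp add: dilation_def)
qed

lemma moment_block:
  "moment (block n a) j = a * dilation n a ^ j / dilation n a ^ n * moment (difference_atoms n) j"
  by (simp add: block_def moment_scale_atoms)

lemma abs_moment_block:
  "abs_moment (block n a) j = \<bar>a\<bar> * dilation n a ^ j / dilation n a ^ n * abs_moment (difference_atoms n) j"
  using dilation_ge_1[of n a] by (simp add: block_def abs_moment_scale_atoms abs_mult power_abs)

lemma power_divide_power_le_inverse:
  fixes T :: real
  assumes "1 \<le> T" and "j < n"
  shows "T ^ j / T ^ n \<le> 1 / T"
proof -
  have "T ^ j * T ^ 1 \<le> T ^ j * T ^ (n - j)"
    using assms by (intro mult_left_mono power_increasing) auto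
  then have "T ^ j * T \<le> T ^ n"
    using assms by (simp add: power_add[symmetric])
  with assms show ?thesis
    by (simp add: divide_simps mult.commute)
qed

lemma abs_moment_block_le:
  assumes "j < n"
  shows "abs_moment (block n a) j \<le> (1 / 2) ^ n"
proof -
  define T where "T = dilation n a"
  define C where "C = difference_abs_moment_bound n"
  have T: "1 \<le> T"
    by (simp add: T_def dilation_ge_1)
  have C: "0 \<le> C"
    by (simp add: C_def difference_abs_moment_bound_def sum_nonneg abs_moment_nonneg)
  have "abs_moment (difference_atoms n) j \<le> C"
    unfolding C_def difference_abs_moment_bound_def
    using assms by (intro member_le_sum) (auto simp: abs_moment_nonneg)
  then have "abs_moment (block n a) j \<le> (\<bar>a\<bar> + 1) * (1 / T) * (C + 1)"
    unfolding abs_moment_block T_def[symmetric] times_divide_eq_right[symmetric] mult.assoc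
    using power_divide_power_le_inverse[OF T assms] T
    by (intro mult_mono) (auto simp: abs_moment_nonneg)
  also have "\<dots> = (1 / 2) ^ n"
    using C by (simp add: T_def C_def dilation_def power_one_over)
  finally show ?thesis .
qed

text \<open>Blocks \<open>m > n\<close> do not contribute to the \<open>n\<close>-th moment, so \<open>a\<^sub>n\<close> only has to correct
  the contributions of the earlier ones.\<close>

function block_coeff :: "(nat \<Rightarrow> real) \<Rightarrow> nat \<Rightarrow> real" where
  "block_coeff s n = (s n - (\<Sum>m<n. moment (block m (block_coeff s m)) n)) / fact n"
  by pat_completeness auto
termination by (relation "Wellfounded.measure snd") auto

declare block_coeff.simps [simp del]

lemma sum_moment_block_coeff: "(\<Sum>m\<le>n. moment (block m (block_coeff s m)) n) = s n"
proof -
  have "moment (block n a) n = a * fact n" for a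
    using dilation_ge_1[of n a] moment_difference_atoms[of n] by (simp add: moment_block)
  moreover have "block_coeff s n * fact n = s n - (\<Sum>m<n. moment (block m (block_coeff s m)) n)"
    by (subst block_coeff.simps) simp
  ultimately show ?thesis
    by (simp add: lessThan_Suc_atMost[symmetric])
qed

lemma signed_moment_problem:
  fixes s :: "nat \<Rightarrow> real"
  shows "\<exists>\<mu>p \<mu>m. finite_moments_borel \<mu>p \<and> finite_moments_borel \<mu>m \<and>
           (\<forall>j. integral\<^sup>L \<mu>p (\<lambda>x. x ^ j) - integral\<^sup>L \<mu>m (\<lambda>x. x ^ j) = s j)"
proof -
  define L where "L n = block n (block_coeff s n)" for n
  have vanish: "moment (L n) j = 0" if "j < n" for j n
    using that moment_difference_atoms[of n] by (simp add: L_def moment_block)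
  have "summable (\<lambda>n. abs_moment (L n) j)" for j
    by (rule summable_comparison_test'[where N = "Suc j", OF summable_geometric[of "1/2"]])
       (auto simp: L_def abs_moment_nonneg intro: abs_moment_block_le)
  moreover have "(\<Sum>n. moment (L n) j) = s j" for j
    using vanish sum_moment_block_coeff[of s j]
    by (subst suminf_finite[of "{..j}"]) (auto simp: L_def)
  ultimately show ?thesis
    using moments_of_atom_series[of L] by simp
qed

lemma sint_power_moment:
  "sint (\<mu>p, \<mu>m) (\<lambda>x. (\<i> * complex_of_real x) ^ n)
     = \<i> ^ n * complex_of_real (integral\<^sup>L \<mu>p (\<lambda>x. x ^ n) - integral\<^sup>L \<mu>m (\<lambda>x. x ^ n))"
proof -
  have power: "(\<lambda>x. (\<i> * complex_of_real x) ^ n) = (\<lambda>x. \<i> ^ n * complex_of_real (x ^ n))"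
    by (simp add: power_mult_distrib)
  show ?thesis
    unfolding sint_def power integral_mult_right_zero integral_complex_of_real
    by (simp add: algebra_simps)
qed

theorem mainTheorem11:
  fixes r b d :: "nat \<Rightarrow> real"
  shows "\<exists>\<rho>11 \<rho>12 \<rho>22. signed_fm \<rho>11 \<and> signed_fm \<rho>12 \<and> signed_fm \<rho>22 \<and>
           (\<forall>n. matrix_moment \<rho>11 \<rho>12 \<rho>22 n = H_mat r b d n)"
proof -
  obtain p1 m1 where 1: "finite_moments_borel p1" "finite_moments_borel m1"
    "\<And>j. integral\<^sup>L p1 (\<lambda>x. x ^ j) - integral\<^sup>L m1 (\<lambda>x. x ^ j) = r j"
    using signed_moment_problem[of r] by blast
  obtain p2 m2 where 2: "finite_moments_borel p2" "finite_moments_borel m2"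
    "\<And>j. integral\<^sup>L p2 (\<lambda>x. x ^ j) - integral\<^sup>L m2 (\<lambda>x. x ^ j) = b j"
    using signed_moment_problem[of b] by blast
  obtain p3 m3 where 3: "finite_moments_borel p3" "finite_moments_borel m3"
    "\<And>j. integral\<^sup>L p3 (\<lambda>x. x ^ j) - integral\<^sup>L m3 (\<lambda>x. x ^ j) = d j"
    using signed_moment_problem[of d] by blast
  have "matrix_moment (p1, m1) (p2, m2) (p3, m3) n = H_mat r b d n" for n
    unfolding matrix_moment_def H_mat_def Let_def sint_power_moment 1(3) 2(3) 3(3)
    by (simp add: vec_eq_iff forall_2 algebra_simps)
  moreover have "signed_fm (p1, m1)" "signed_fm (p2, m2)" "signed_fm (p3, m3)"
    using 1 2 3 by (auto simp: signed_fm_def)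
  ultimately show ?thesis by blast
qed

end
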